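(* Let $\mathcal{L}$ and $\mathcal{L}'$ be lattices and $u,u':\mathbb{N}\to\mathbb{N}$. If $\mathcal{L}$ is $O(u(n))$ and $\mathcal{L}'$ is $O(u'(n))$, then the product lattice $\mathcal{L}\times\mathcal{L}'$ is $O(u(n)u'(n))$.
   Context: A lattice means a partially ordered set $(\mathcal{L},\sqsubseteq)$ with least element $\bot$ in which any two elements have a least upper bound $\sqcup$; $\bigsqcup S$ denotes the least upper bound of a finite set ($\bigsqcup\emptyset=\bot$). The product lattice $\mathcal{L}\times\mathcal{L}'$ has pairs $(\ell,\ell')$ with $\ell\in\mathcal{L},\ell'\in\mathcal{L}'$ ordered componentwise: $(\ell_0,\ell_1)\sqsubseteq(\jmath_0,\jmath_1)$ iff $\ell_0\sqsubseteq\jmath_0$ and $\ell_1\sqsubseteq\jmath_1$. The closure set of a finite $S$ is $C(S)=\{\bigsqcup S' : S'\subseteq S\}$ and $CS_{\mathcal{L}}(n)=\max\{|C(S)| : S\subseteq\mathcal{L}\text{ finite}, |S|\le n\}$. For $f,g:\mathbb{N}\to\mathbb{N}$, $f$ is $O(g)$ iff there exist $N_0\in\mathbb{N}$ and rational $C>0$ with $f(n)\le Cg(n)$ for all $n\ge N_0$. A lattice $\mathcal{L}$ is $O(f(n))$ iff $CS_{\mathcal{L}}(n)$ is $O(f(n))$. *)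

theory Defs
  imports Complex_Main "HOL-Library.Product_Order"
begin

text \<open>A lattice in the sense of the paper: a partial order with least element
  and binary least upper bounds, i.e. the type class semilattice_sup + order_bot.\<close>

definition big_join :: "'a::{semilattice_sup,order_bot} set \<Rightarrow> 'a" where
  "big_join S = Finite_Set.fold sup bot S"

definition closure_set :: "'a::{semilattice_sup,order_bot} set \<Rightarrow> 'a set" where
  "closure_set S = {big_join S' | S'. S' \<subseteq> S}"

definition CS :: "'a::{semilattice_sup,order_bot} itself \<Rightarrow> nat \<Rightarrow> nat" where
  "CS _ n = Max {card (closure_set (S :: 'a set)) | S. finite S \<and> card S \<le> n}"

definition bigO :: "(nat \<Rightarrow> nat) \<Rightarrow> (nat \<Rightarrow> nat) \<Rightarrow> bool" where
  "bigO f g \<longleftrightarrow> (\<exists>N0::nat. \<exists>C::rat. C > 0 \<and> (\<forall>n\<ge>N0. of_nat (f n) \<le> C * of_nat (g n)))"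

end

theory Submission
  imports Defs
begin

text \<open>The join of a set of pairs is the pair of the joins of its two projections, so every
  element of the closure set of S \<subseteq> L \<times> L' lies in C(fst ` S) \<times> C(snd ` S); both projections
  have at most |S| elements, whence CS_{L \<times> L'}(n) \<le> CS_L(n) \<cdot> CS_{L'}(n), and big-O bounds
  multiply.\<close>

lemma big_join_empty [simp]: "big_join {} = bot"
  by (simp add: big_join_def)

lemma big_join_insert [simp]:
  fixes S :: "'a::{semilattice_sup,order_bot} set"
  assumes "finite S"
  shows "big_join (insert x S) = sup x (big_join S)"
proof -
  interpret comp_fun_idem "sup :: 'a \<Rightarrow> 'a \<Rightarrow> 'a" by (fact comp_fun_idem_sup)
  show ?thesis using assms by (simp add: big_join_def fold_insert_idem)
qed

lemma big_join_prod:
  fixes S :: "('a::{semilattice_sup,order_bot} \<times> 'b::{semilattice_sup,order_bot}) set"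
  assumes "finite S"
  shows "big_join S = (big_join (fst ` S), big_join (snd ` S))"
  using assms by (induction S rule: finite_induct) (simp_all add: prod_eq_iff)

lemma closure_set_eq_image_Pow: "closure_set S = big_join ` Pow S"
  unfolding closure_set_def by auto

lemma finite_closure_set: "finite S \<Longrightarrow> finite (closure_set S)"
  by (simp add: closure_set_eq_image_Pow)

lemma card_closure_set_le:
  assumes "finite S"
  shows "card (closure_set S) \<le> 2 ^ card S"
proof -
  have "card (big_join ` Pow S) \<le> card (Pow S)"
    using assms by (intro card_image_le) simp
  then show ?thesis
    using assms by (simp add: closure_set_eq_image_Pow card_Pow)
qed

lemma finite_closure_set_cards:
  "finite {card (closure_set (S :: 'a::{semilattice_sup,order_bot} set)) | S. finite S \<and> card S \<le> n}"
proof (rule finite_subset)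
  show "{card (closure_set (S :: 'a set)) | S. finite S \<and> card S \<le> n} \<subseteq> {..2 ^ n}"
  proof clarify
    fix S :: "'a set"
    assume "finite S" "card S \<le> n"
    then have "card (closure_set S) \<le> 2 ^ card S" "(2::nat) ^ card S \<le> 2 ^ n"
      by (simp_all add: card_closure_set_le power_increasing)
    then show "card (closure_set S) \<le> 2 ^ n" by linarith
  qed
qed simp

lemma card_closure_set_le_CS:
  fixes S :: "'a::{semilattice_sup,order_bot} set"
  assumes "finite S" "card S \<le> n"
  shows "card (closure_set S) \<le> CS TYPE('a) n"
  unfolding CS_def using assms by (intro Max_ge[OF finite_closure_set_cards]) blast

lemma CS_le:
  assumes "\<And>S :: 'a::{semilattice_sup,order_bot} set.
             finite S \<Longrightarrow> card S \<le> n \<Longrightarrow> card (closure_set S) \<le> k"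
  shows "CS TYPE('a) n \<le> k"
  unfolding CS_def
proof (rule Max.boundedI[OF finite_closure_set_cards])
  show "{card (closure_set (S :: 'a set)) | S. finite S \<and> card S \<le> n} \<noteq> {}"
    by (rule ex_in_conv[THEN iffD1]) (use finite.emptyI in fastforce)
qed (use assms in blast)

lemma closure_set_prod_subset:
  fixes S :: "('a::{semilattice_sup,order_bot} \<times> 'b::{semilattice_sup,order_bot}) set"
  assumes "finite S"
  shows "closure_set S \<subseteq> closure_set (fst ` S) \<times> closure_set (snd ` S)"
proof
  fix p assume "p \<in> closure_set S"
  then obtain S' where p: "p = big_join S'" and "S' \<subseteq> S"
    unfolding closure_set_def by blast
  moreover have "finite S'" using \<open>S' \<subseteq> S\<close> assms finite_subset by blast
  ultimately show "p \<in> closure_set (fst ` S) \<times> closure_set (snd ` S)"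
    unfolding closure_set_def by (auto simp: big_join_prod)
qed

lemma CS_prod_le:
  "CS TYPE('a::{semilattice_sup,order_bot} \<times> 'b::{semilattice_sup,order_bot}) n
     \<le> CS TYPE('a) n * CS TYPE('b) n"
proof (rule CS_le)
  fix S :: "('a \<times> 'b) set"
  assume S: "finite S" "card S \<le> n"
  have "card (closure_set S) \<le> card (closure_set (fst ` S) \<times> closure_set (snd ` S))"
    using S by (intro card_mono closure_set_prod_subset) (simp_all add: finite_closure_set)
  also have "\<dots> = card (closure_set (fst ` S)) * card (closure_set (snd ` S))"
    by (simp add: card_cartesian_product)
  also have "\<dots> \<le> CS TYPE('a) n * CS TYPE('b) n"
    using S card_image_le[of S fst] card_image_le[of S snd]
    by (intro mult_mono card_closure_set_le_CS) auto
  finally show "card (closure_set S) \<le> CS TYPE('a) n * CS TYPE('b) n" .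
qed

lemma bigO_mono:
  assumes "\<And>n. f n \<le> f' n" and "bigO f' g"
  shows "bigO f g"
proof -
  obtain N :: nat and C :: rat
    where C: "C > 0" and N: "\<forall>n\<ge>N. of_nat (f' n) \<le> C * of_nat (g n)"
    using assms(2) unfolding bigO_def by blast
  have "\<forall>n\<ge>N. (of_nat (f n) :: rat) \<le> C * of_nat (g n)"
  proof (intro allI impI)
    fix n :: nat
    assume "n \<ge> N"
    have "(of_nat (f n) :: rat) \<le> of_nat (f' n)" using assms(1) by simp
    also have "\<dots> \<le> C * of_nat (g n)" using N \<open>n \<ge> N\<close> by blast
    finally show "(of_nat (f n) :: rat) \<le> C * of_nat (g n)" .
  qed
  with C show ?thesis unfolding bigO_def by blast
qed

lemma bigO_mult:
  assumes "bigO f g" and "bigO f' g'"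
  shows "bigO (\<lambda>n. f n * f' n) (\<lambda>n. g n * g' n)"
proof -
  obtain N :: nat and C :: rat
    where C: "C > 0" and N: "\<And>n. n \<ge> N \<Longrightarrow> of_nat (f n) \<le> C * of_nat (g n)"
    using assms(1) unfolding bigO_def by blast
  obtain N' :: nat and C' :: rat
    where C': "C' > 0" and N': "\<And>n. n \<ge> N' \<Longrightarrow> of_nat (f' n) \<le> C' * of_nat (g' n)"
    using assms(2) unfolding bigO_def by blast
  have "\<forall>n\<ge>max N N'. (of_nat (f n * f' n) :: rat) \<le> (C * C') * of_nat (g n * g' n)"
  proof (intro allI impI)
    fix n :: nat
    assume "n \<ge> max N N'"
    have "(of_nat (f n * f' n) :: rat) = of_nat (f n) * of_nat (f' n)" by simp
    also have "\<dots> \<le> (C * of_nat (g n)) * (C' * of_nat (g' n))"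
      using \<open>n \<ge> max N N'\<close> N N' C by (intro mult_mono) (auto simp: zero_le_mult_iff)
    also have "\<dots> = (C * C') * of_nat (g n * g' n)" by (simp add: algebra_simps)
    finally show "(of_nat (f n * f' n) :: rat) \<le> (C * C') * of_nat (g n * g' n)" .
  qed
  moreover have "C * C' > 0" using C C' by simp
  ultimately show ?thesis unfolding bigO_def by blast
qed

theorem mainTheorem3:
  fixes u u' :: "nat \<Rightarrow> nat"
  assumes "bigO (CS TYPE('a::{semilattice_sup,order_bot})) u"
      and "bigO (CS TYPE('b::{semilattice_sup,order_bot})) u'"
  shows "bigO (CS TYPE('a \<times> 'b)) (\<lambda>n. u n * u' n)"
  using CS_prod_le bigO_mult[OF assms] by (rule bigO_mono)

end
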